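(* Let $a_1\ge1$ be an integer and $n \ge 4$ an even integer. Suppose that $p$ is a high primitive divisor of $\ell_n$ such that $(D \mid p) = -1$, and put $v := \nu_p(\ell_n)$. Then there exists $\bm{x} \in \mathcal{L}(f)$ such that $\tau(\bm{x}; p^v) = 2n$, $x_s \not\equiv x_t \pmod{p^v}$ for all integers $s,t$ with $0 < s < t < 2n$ and $s \equiv t \pmod 2$, and $x_j \not\equiv 0 \pmod{p^v}$ for all $j \ge 0$.
   Context: Let $f := X^2 - a_1X - 1$, $D := a_1^2+4$, and $\alpha,\beta$ the roots of $f$ ($\alpha\beta=-1$, $\alpha+\beta=a_1$). $\mathcal{L}(f)$ is the set of integer sequences $\bm{x}=(x_n)_{n\ge0}$ with $x_{n+2} = a_1x_{n+1} + x_n$ for all $n\ge0$. For an integer $m\ge1$, $\tau(\bm{x}; m)$ is the minimal integer $t \ge 1$ with $x_{n+t}\equiv x_n \pmod m$ for all sufficiently large $n$. The Lehmer sequence is $\ell_n := \frac{\alpha^n - (-\beta)^n}{\alpha + \beta}$ for odd $n$ and $\ell_n := \frac{\alpha^n - (-\beta)^n}{\alpha^2 - \beta^2}$ for even $n$ (integers). A prime $p$ is a primitive divisor of $\ell_n$ if $p \mid \ell_n$ but $p \nmid (\alpha^2-\beta^2)^2\ell_1\cdots\ell_{n-1}$, where $(\alpha^2-\beta^2)^2 = a_1^2D$; it is a high primitive divisor if it is an odd primitive divisor with $p^{\nu_p(\ell_n)} > n$, $\nu_p$ being the $p$-adic valuation. $(D\mid p)$ is the Legendre symbol. *)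

theory Defs
  imports Complex_Main "HOL-Number_Theory.Number_Theory"
begin

definition disc :: "int \<Rightarrow> int" where
  "disc a1 = a1^2 + 4"

definition lroot_alpha :: "int \<Rightarrow> real" where
  "lroot_alpha a1 = (real_of_int a1 + sqrt (real_of_int (disc a1))) / 2"

definition lroot_beta :: "int \<Rightarrow> real" where
  "lroot_beta a1 = (real_of_int a1 - sqrt (real_of_int (disc a1))) / 2"

definition lehmer_real :: "int \<Rightarrow> nat \<Rightarrow> real" where
  "lehmer_real a1 n =
     (let \<alpha> = lroot_alpha a1; \<beta> = lroot_beta a1 in
      if odd n then (\<alpha>^n - (-\<beta>)^n) / (\<alpha> + \<beta>)
      else (\<alpha>^n - (-\<beta>)^n) / (\<alpha>^2 - \<beta>^2))"

definition lehmer :: "int \<Rightarrow> nat \<Rightarrow> int" where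
  "lehmer a1 n = (THE k::int. real_of_int k = lehmer_real a1 n)"

definition in_L :: "int \<Rightarrow> (nat \<Rightarrow> int) \<Rightarrow> bool" where
  "in_L a1 x \<longleftrightarrow> (\<forall>n. x (n+2) = a1 * x (n+1) + x n)"

definition tau :: "(nat \<Rightarrow> int) \<Rightarrow> int \<Rightarrow> nat" where
  "tau x m = (LEAST t. t \<ge> 1 \<and> (\<exists>N. \<forall>n\<ge>N. [x (n+t) = x n] (mod m)))"

definition primitive_divisor :: "int \<Rightarrow> int \<Rightarrow> nat \<Rightarrow> bool" where
  "primitive_divisor a1 p n \<longleftrightarrow> prime p \<and> p dvd lehmer a1 n \<and>
     \<not> p dvd (a1^2 * disc a1 * (\<Prod>k\<in>{1..<n}. lehmer a1 k))"

definition high_primitive_divisor :: "int \<Rightarrow> int \<Rightarrow> nat \<Rightarrow> bool" where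
  "high_primitive_divisor a1 p n \<longleftrightarrow> primitive_divisor a1 p n \<and> odd p \<and>
     p ^ multiplicity p (lehmer a1 n) > int n"

end

theory Submission
  imports Defs
begin

text \<open>
  Let U, V be the Lucas sequences of f, so that a1 l(k) is U(k) for even k and V(k) for odd k,
  and let Wz(j) = 2 z(j+1) - a1 z(j). Every z in L(f) satisfies
  z(m+2k) - (-1)^k z(m) = U(k) Wz(m+k) and z(m+2k) + (-1)^k z(m) = V(k) z(m+k).
  With U(n) = U(n/2) V(n/2) and the primitivity of p this gives z(m+n) = -z(m) modulo p^v, and
  it shows that z(s) = z(t) modulo p^v with t - s even and 0 < t - s < 2n forces z or Wz to
  vanish modulo p^v somewhere. So it suffices to find z for which neither z nor Wz ever vanishes.
  Take z with initial terms 1, t where 0 \<le> t < p^v: antiperiodicity reduces every vanishing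
  to one of n conditions, each linear in t and, the relevant Casoratians being 1 and -D,
  excluding at most one t. As n < p^v, some t survives.
\<close>

section \<open>Lucas sequences\<close>

fun lucas_u :: "int \<Rightarrow> nat \<Rightarrow> int" where
  "lucas_u a 0 = 0"
| "lucas_u a (Suc 0) = 1"
| "lucas_u a (Suc (Suc k)) = a * lucas_u a (Suc k) + lucas_u a k"

fun lucas_v :: "int \<Rightarrow> nat \<Rightarrow> int" where
  "lucas_v a 0 = 2"
| "lucas_v a (Suc 0) = a"
| "lucas_v a (Suc (Suc k)) = a * lucas_v a (Suc k) + lucas_v a k"

text \<open>For \<open>z\<^sub>j = c \<alpha>\<^sup>j + c' \<beta>\<^sup>j\<close> this is \<open>(\<alpha> - \<beta>)(c \<alpha>\<^sup>j - c' \<beta>\<^sup>j)\<close>.\<close>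

definition companion :: "int \<Rightarrow> (nat \<Rightarrow> int) \<Rightarrow> nat \<Rightarrow> int" where
  "companion a z j = 2 * z (Suc j) - a * z j"

definition casoratian :: "(nat \<Rightarrow> int) \<Rightarrow> (nat \<Rightarrow> int) \<Rightarrow> nat \<Rightarrow> int" where
  "casoratian y z j = y j * z (Suc j) - y (Suc j) * z j"

lemma in_L_iff: "in_L a z \<longleftrightarrow> (\<forall>j. z (Suc (Suc j)) = a * z (Suc j) + z j)"
  unfolding in_L_def by (simp add: numeral_2_eq_2)

lemma in_LD: "in_L a z \<Longrightarrow> z (Suc (Suc j)) = a * z (Suc j) + z j"
  by (simp add: in_L_iff)

lemma in_L_lucas_u: "in_L a (lucas_u a)"
  by (simp add: in_L_iff)

lemma in_L_lucas_v: "in_L a (lucas_v a)"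
  by (simp add: in_L_iff)

lemma in_L_linear: "in_L a y \<Longrightarrow> in_L a z \<Longrightarrow> in_L a (\<lambda>j. c * y j + d * z j)"
  by (simp add: in_L_iff algebra_simps)

lemma in_L_shift: "in_L a z \<Longrightarrow> in_L a (\<lambda>j. z (Suc j))"
  by (simp add: in_L_iff)

lemma in_L_companion: "in_L a z \<Longrightarrow> in_L a (companion a z)"
  by (simp add: in_L_iff companion_def algebra_simps)

lemma of_int_in_L_eq:
  fixes w :: "nat \<Rightarrow> 'a::ring_1"
  assumes z: "in_L a z" and w: "\<And>j. w (Suc (Suc j)) = of_int a * w (Suc j) + w j"
    and "w 0 = of_int (z 0)" and "w 1 = of_int (z 1)"
  shows "w j = of_int (z j)"
proof (induction j rule: induct_nat_012)
  case (ge2 j)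
  then show ?case by (simp add: w in_LD[OF z])
qed (use assms in simp_all)

lemma in_L_eqI:
  assumes "in_L a y" "in_L a z" "y 0 = z 0" "y 1 = z 1"
  shows "y = z"
proof
  fix j
  show "y j = z j"
    using of_int_in_L_eq[of a z y j] assms by (simp add: in_LD)
qed

lemma companion_lucas_u: "companion a (lucas_u a) = lucas_v a"
  by (rule in_L_eqI[of a]) (simp_all add: in_L_companion in_L_lucas_u in_L_lucas_v companion_def)

lemma casoratian_in_L:
  assumes "in_L a y" "in_L a z"
  shows "casoratian y z j = (-1)^j * casoratian y z 0"
proof (induction j)
  case (Suc j)
  then show ?case
    using in_LD[OF assms(1), of j] in_LD[OF assms(2), of j]
    by (simp add: casoratian_def algebra_simps)
qed simp

lemma casoratian_companion:
  assumes "in_L a y" "in_L a z"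
  shows "casoratian (companion a y) (companion a z) 0 = - disc a * casoratian y z 0"
  using in_LD[OF assms(1), of 0] in_LD[OF assms(2), of 0]
  by (simp add: casoratian_def companion_def disc_def power2_eq_square algebra_simps)

lemma in_L_dvd_step2:
  assumes "in_L a z" "a dvd z j"
  shows "a dvd z (j + 2 * m)"
proof (induction m)
  case (Suc m)
  have "z (j + 2 * Suc m) = a * z (Suc (j + 2 * m)) + z (j + 2 * m)"
    using in_LD[OF assms(1)] by (simp add: numeral_2_eq_2)
  then show ?case using Suc by simp
qed (use assms in simp)

lemma shift_identity:
  fixes e :: int
  assumes z: "in_L a z" and u: "in_L a u"
    and base0: "\<And>m. z m + e * z m = u 0 * y m"
    and base1: "\<And>m. z (Suc (Suc m)) - e * z m = u 1 * y (Suc m)"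
  shows "z (m + 2 * k) + e * (-1)^k * z m = u k * y (m + k)"
proof (induction k arbitrary: m rule: induct_nat_012)
  case 0
  then show ?case using base0 by simp
next
  case 1
  then show ?case using base1[of m] by (simp add: numeral_2_eq_2)
next
  case (ge2 k)
  have "u (Suc (Suc k)) * y (m + Suc (Suc k))
      = a * (u (Suc k) * y (Suc m + Suc k)) + u k * y (Suc (Suc m) + k)"
    by (simp add: in_LD[OF u] algebra_simps)
  also have "\<dots> = a * (z (Suc m + 2 * Suc k) + e * (-1)^Suc k * z (Suc m))
      + (z (Suc (Suc m) + 2 * k) + e * (-1)^k * z (Suc (Suc m)))"
    by (simp only: ge2.IH)
  also have "\<dots> = z (m + 2 * Suc (Suc k)) + e * (-1)^Suc (Suc k) * z m"
    using in_LD[OF z, of m] in_LD[OF z, of "m + 2 * Suc k"] in_LD[OF z, of "Suc (m + 2 * k)"]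
    by (simp add: algebra_simps)
  finally show ?case ..
qed

lemma lucas_v_shift:
  "in_L a z \<Longrightarrow> z (m + 2 * k) + (-1)^k * z m = lucas_v a k * z (m + k)"
  using shift_identity[of a z "lucas_v a" 1 z m k] by (simp add: in_L_lucas_v in_LD)

lemma lucas_u_shift:
  "in_L a z \<Longrightarrow> z (m + 2 * k) - (-1)^k * z m = lucas_u a k * companion a z (m + k)"
  using shift_identity[of a z "lucas_u a" "-1" "companion a z" m k]
  by (simp add: in_L_lucas_u in_LD companion_def)

lemma lucas_u_double: "lucas_u a (2 * k) = lucas_u a k * lucas_v a k"
  using lucas_u_shift[OF in_L_lucas_u, of a 0 k] by (simp add: companion_lucas_u)

section \<open>Lehmer numbers\<close>

lemma lroot_sum: "lroot_alpha a + lroot_beta a = of_int a"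
  by (simp add: lroot_alpha_def lroot_beta_def field_simps)

lemma lroot_diff: "lroot_alpha a - lroot_beta a = sqrt (of_int (disc a))"
  by (simp add: lroot_alpha_def lroot_beta_def field_simps)

lemma lroot_diff_nonzero: "lroot_alpha a - lroot_beta a \<noteq> 0"
proof -
  have "of_int (disc a) > (0::real)"
    unfolding disc_def by (simp add: add_nonneg_pos)
  then show ?thesis by (simp add: lroot_diff)
qed

lemma lroot_square:
  "lroot_alpha a ^ 2 = of_int a * lroot_alpha a + 1"
  "lroot_beta a ^ 2 = of_int a * lroot_beta a + 1"
proof -
  define s where "s = sqrt (of_int (disc a))"
  have s2: "s * s = of_int a * of_int a + 4"
    unfolding s_def disc_def by (simp add: add_nonneg_nonneg flip: power2_eq_square)
  show "lroot_alpha a ^ 2 = of_int a * lroot_alpha a + 1"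
    unfolding lroot_alpha_def s_def[symmetric] power2_eq_square
    by (simp add: field_simps s2)
  show "lroot_beta a ^ 2 = of_int a * lroot_beta a + 1"
    unfolding lroot_beta_def s_def[symmetric] power2_eq_square
    by (simp add: field_simps s2)
qed

lemma power_rec_of_square:
  fixes r c :: "'a::comm_ring_1"
  assumes "r^2 = c * r + 1"
  shows "r ^ Suc (Suc j) = c * r ^ Suc j + r ^ j"
proof -
  have "r ^ Suc (Suc j) = r^2 * r^j" by (simp add: power2_eq_square)
  then show ?thesis by (simp add: assms algebra_simps)
qed

lemmas lroot_power_rec = lroot_square[THEN power_rec_of_square]

lemma lucas_u_binet:
  "of_int (lucas_u a k) = (lroot_alpha a ^ k - lroot_beta a ^ k) / (lroot_alpha a - lroot_beta a)"
proof (rule of_int_in_L_eq[OF in_L_lucas_u, symmetric])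
  fix j
  show "(lroot_alpha a ^ Suc (Suc j) - lroot_beta a ^ Suc (Suc j)) / (lroot_alpha a - lroot_beta a)
      = of_int a * ((lroot_alpha a ^ Suc j - lroot_beta a ^ Suc j) / (lroot_alpha a - lroot_beta a))
        + (lroot_alpha a ^ j - lroot_beta a ^ j) / (lroot_alpha a - lroot_beta a)"
    unfolding lroot_power_rec divide_inverse by (simp add: algebra_simps)
qed (use lroot_diff_nonzero[of a] in simp_all)

lemma lucas_v_binet: "of_int (lucas_v a k) = lroot_alpha a ^ k + lroot_beta a ^ k"
proof (rule of_int_in_L_eq[OF in_L_lucas_v, symmetric])
  fix j
  show "lroot_alpha a ^ Suc (Suc j) + lroot_beta a ^ Suc (Suc j)
      = of_int a * (lroot_alpha a ^ Suc j + lroot_beta a ^ Suc j) + (lroot_alpha a ^ j + lroot_beta a ^ j)"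
    unfolding lroot_power_rec
    by (simp add: algebra_simps)
qed (simp_all add: lroot_sum)

lemma lehmer_real_even:
  "even k \<Longrightarrow> lehmer_real a k = of_int (lucas_u a k) / of_int a"
proof -
  assume "even k"
  have "lroot_alpha a ^ 2 - lroot_beta a ^ 2 = (lroot_alpha a - lroot_beta a) * of_int a"
    by (simp add: power2_eq_square algebra_simps flip: lroot_sum)
  then show ?thesis
    using \<open>even k\<close> lroot_diff_nonzero[of a]
    by (simp add: lehmer_real_def Let_def lucas_u_binet)
qed

lemma lehmer_real_odd:
  "odd k \<Longrightarrow> lehmer_real a k = of_int (lucas_v a k) / of_int a"
  by (simp add: lehmer_real_def lucas_v_binet lroot_sum)

lemma lehmer_eqI:
  assumes "w = a * q" "a \<noteq> 0" "lehmer_real a k = of_int w / of_int a"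
  shows "lehmer a k = q"
  unfolding lehmer_def using assms by (intro the_equality) simp_all

lemma lucas_u_eq_lehmer:
  assumes "even k" "a \<noteq> 0"
  shows "lucas_u a k = a * lehmer a k"
proof -
  obtain m where "k = 2 * m" using \<open>even k\<close> by auto
  then have "a dvd lucas_u a k"
    using in_L_dvd_step2[OF in_L_lucas_u, of a 0 m] by simp
  then obtain q where "lucas_u a k = a * q" by blast
  with assms show ?thesis
    using lehmer_eqI[of "lucas_u a k" a q k] lehmer_real_even by simp
qed

lemma lucas_v_eq_lehmer:
  assumes "odd k" "a \<noteq> 0"
  shows "lucas_v a k = a * lehmer a k"
proof -
  obtain m where "k = 1 + 2 * m" using \<open>odd k\<close> by (metis oddE add.commute)
  then have "a dvd lucas_v a k"
    using in_L_dvd_step2[OF in_L_lucas_v, of a 1 m] by simp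
  then obtain q where "lucas_v a k = a * q" by blast
  with assms show ?thesis
    using lehmer_eqI[of "lucas_v a k" a q k] lehmer_real_odd by simp
qed

section \<open>Residues and periods\<close>

lemma card_dvd_residues_le_1:
  fixes p :: int
  assumes y: "in_L a y" and z: "in_L a z" and "prime p"
    and cas: "\<not> p dvd casoratian y z 0"
  shows "card {t \<in> {0..<p^v}. p^v dvd y j + t * z j} \<le> 1"
proof -
  define S where "S = {t \<in> {0..<p^v}. p^v dvd y j + t * z j}"
  have no_common_factor: "\<not> (p dvd y j \<and> p dvd z j)"
  proof
    assume "p dvd y j \<and> p dvd z j"
    then have "p dvd casoratian y z j"
      unfolding casoratian_def by (metis dvd_diff dvd_mult dvd_mult2)
    then show False using cas by (cases "even j") (simp_all add: casoratian_in_L[OF y z, of j])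
  qed
  have "t1 = t2" if t1: "t1 \<in> S" and t2: "t2 \<in> S" for t1 t2
  proof (cases "p dvd z j")
    case True
    have "v = 0"
    proof (rule ccontr)
      assume "v \<noteq> 0"
      then have "p dvd y j + t1 * z j"
        using t1 dvd_trans[of p "p^v"] by (simp add: S_def)
      then show False using True no_common_factor by (simp add: dvd_add_left_iff)
    qed
    then show ?thesis using t1 t2 by (simp add: S_def)
  next
    case False
    then have "coprime (p^v) (z j)"
      using \<open>prime p\<close> by (simp add: prime_imp_coprime coprime_power_left_iff)
    moreover have "p^v dvd (t1 - t2) * z j"
      using dvd_diff[of "p^v" "y j + t1 * z j" "y j + t2 * z j"] t1 t2
      by (simp add: S_def algebra_simps)
    ultimately have "p^v dvd t1 - t2" by (simp add: coprime_dvd_mult_left_iff)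
    moreover have "\<bar>t1 - t2\<bar> < p^v" using t1 t2 by (auto simp: S_def)
    ultimately show ?thesis using dvd_imp_le_int[of "t1 - t2" "p^v"] by force
  qed
  moreover have "finite S"
    by (rule finite_subset[of _ "{0..<p^v}"]) (auto simp: S_def)
  ultimately show ?thesis unfolding S_def[symmetric] by (simp add: card_le_Suc0_iff_eq)
qed

lemma mod_invariant:
  fixes d :: nat
  assumes "\<And>m. P (m + d) \<longleftrightarrow> P m"
  shows "P (j mod d) \<longleftrightarrow> P j"
proof -
  have "P (r + q * d) \<longleftrightarrow> P r" for r q
  proof (induction q)
    case (Suc q)
    have "r + Suc q * d = (r + q * d) + d" by simp
    then show ?case using Suc assms by metis
  qed simp
  then show ?thesis by (metis mod_div_mult_eq)
qed

definition periodic_mod :: "(nat \<Rightarrow> int) \<Rightarrow> int \<Rightarrow> nat \<Rightarrow> bool" where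
  "periodic_mod x m T \<longleftrightarrow> (\<forall>j. [x (j + T) = x j] (mod m))"

lemma periodic_mod_mult:
  assumes "periodic_mod x m T"
  shows "[x (j + k * T) = x j] (mod m)"
proof (induction k)
  case (Suc k)
  have "[x (j + k * T + T) = x (j + k * T)] (mod m)"
    using assms by (simp add: periodic_mod_def)
  moreover have "j + Suc k * T = j + k * T + T" by simp
  ultimately have "[x (j + Suc k * T) = x (j + k * T)] (mod m)" by metis
  then show ?case using Suc cong_trans by blast
qed simp

lemma periodic_mod_add:
  "periodic_mod x m y \<Longrightarrow> periodic_mod x m z \<Longrightarrow> periodic_mod x m (y + z)"
  unfolding periodic_mod_def by (metis add.assoc cong_trans)

lemma periodic_mod_mod:
  assumes T: "periodic_mod x m T" and y: "periodic_mod x m y"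
  shows "periodic_mod x m (y mod T)"
  unfolding periodic_mod_def
proof
  fix j
  have "[x (j + y mod T) = x (j + y mod T + y div T * T)] (mod m)"
    by (rule cong_sym[OF periodic_mod_mult[OF T]])
  also have "x (j + y mod T + y div T * T) = x (j + y)"
    by (simp add: add.assoc mod_div_mult_eq)
  also have "[x (j + y) = x j] (mod m)"
    using y by (simp add: periodic_mod_def)
  finally show "[x (j + y mod T) = x j] (mod m)" .
qed

lemma periodic_mod_of_eventually:
  assumes T: "periodic_mod x m T" "T \<ge> 1" and y: "\<forall>i\<ge>N. [x (i + y) = x i] (mod m)"
  shows "periodic_mod x m y"
  unfolding periodic_mod_def
proof
  fix j
  have "N * 1 \<le> N * T" using T(2) by (rule mult_le_mono2)
  then have "N \<le> j + N * T" by (metis mult_1_right trans_le_add2)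
  have "[x (j + y) = x (j + y + N * T)] (mod m)"
    by (rule cong_sym[OF periodic_mod_mult[OF T(1)]])
  also have "x (j + y + N * T) = x (j + N * T + y)" by (simp add: ac_simps)
  also have "[x (j + N * T + y) = x (j + N * T)] (mod m)"
    using y \<open>N \<le> j + N * T\<close> by blast
  also have "[x (j + N * T) = x j] (mod m)"
    using periodic_mod_mult[OF T(1)] .
  finally show "[x (j + y) = x j] (mod m)" .
qed

lemma tau_eqI:
  assumes "T \<ge> 1" "periodic_mod x m T"
    and minimal: "\<And>y. 1 \<le> y \<Longrightarrow> y < T \<Longrightarrow> \<not> periodic_mod x m y"
  shows "tau x m = T"
  unfolding tau_def
proof (rule Least_equality)
  show "1 \<le> T \<and> (\<exists>N. \<forall>i\<ge>N. [x (i + T) = x i] (mod m))"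
    using assms by (auto simp: periodic_mod_def)
next
  fix y assume "1 \<le> y \<and> (\<exists>N. \<forall>i\<ge>N. [x (i + y) = x i] (mod m))"
  then show "T \<le> y"
    using minimal periodic_mod_of_eventually[OF assms(2,1)] by (meson not_le)
qed

section \<open>Sequences modulo a high primitive divisor\<close>

text \<open>The element of \<open>L(f)\<close> with initial terms \<open>1, t\<close>.\<close>

definition seq_from_1 :: "int \<Rightarrow> int \<Rightarrow> nat \<Rightarrow> int" where
  "seq_from_1 a t j = lucas_u a (Suc j) + (t - a) * lucas_u a j"

lemma seq_from_1_linear: "seq_from_1 a t j = seq_from_1 a 0 j + t * lucas_u a j"
  by (simp add: seq_from_1_def algebra_simps)

lemma in_L_seq_from_1: "in_L a (seq_from_1 a t)"
  unfolding seq_from_1_def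
  using in_L_linear[OF in_L_shift[OF in_L_lucas_u] in_L_lucas_u, of a 1 "t - a"] by simp

lemma casoratian_seq_from_1: "casoratian (seq_from_1 a 0) (lucas_u a) 0 = 1"
  by (simp add: casoratian_def seq_from_1_def)

text \<open>Here n = 2h and v is the p-adic valuation of l(n); the conditions on U(k), V(k) for k < n
  express that p is a primitive divisor, as a l(k) is U(k) or V(k).\<close>

locale high_divisor =
  fixes a p :: int and n h v :: nat
  assumes prime: "prime p" and odd: "odd p"
    and n_eq: "n = 2 * h" and h_ge: "h \<ge> 2"
    and dvd_lucas_u_n: "p^v dvd lucas_u a n"
    and not_dvd_disc: "\<not> p dvd disc a"
    and not_dvd_lucas_u: "\<And>k. 1 \<le> k \<Longrightarrow> k < n \<Longrightarrow> even k \<Longrightarrow> \<not> p dvd lucas_u a k"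
    and not_dvd_lucas_v: "\<And>k. 1 \<le> k \<Longrightarrow> k < n \<Longrightarrow> odd k \<Longrightarrow> \<not> p dvd lucas_v a k"
    and high: "int n < p^v"
begin

lemma dvd_cancel: "\<not> p dvd c \<Longrightarrow> p^v dvd c * d \<longleftrightarrow> p^v dvd d"
  using prime by (simp add: prime_imp_coprime coprime_dvd_mult_right_iff)

lemma dvd_cancel_2: "p^v dvd 2 * d \<longleftrightarrow> p^v dvd d"
proof -
  have "\<not> p dvd 2"
  proof
    assume "p dvd 2"
    then have "p \<le> 2" by (simp add: zdvd_imp_le)
    then show False using prime_ge_2_int[OF prime] odd by simp
  qed
  then show ?thesis by (rule dvd_cancel)
qed

lemma dvd_shift_diff_iff:
  assumes z: "in_L a z" and k: "1 \<le> k" "k < n"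
  shows "p^v dvd z (m + 2 * k) - z m
    \<longleftrightarrow> p^v dvd (if even k then companion a z (m + k) else z (m + k))"
proof (cases "even k")
  case True
  then show ?thesis
    using lucas_u_shift[OF z, of m k] dvd_cancel[OF not_dvd_lucas_u[OF k True]] by simp
next
  case False
  then show ?thesis
    using lucas_v_shift[OF z, of m k] dvd_cancel[OF not_dvd_lucas_v[OF k False]] by simp
qed

lemma antiperiodic:
  assumes z: "in_L a z"
  shows "p^v dvd z (m + n) + z m"
proof (cases "even h")
  case True
  have "p^v dvd lucas_v a h"
    using dvd_lucas_u_n dvd_cancel[OF not_dvd_lucas_u[of h]] True h_ge
    by (simp add: n_eq lucas_u_double)
  then show ?thesis
    using lucas_v_shift[OF z, of m h] True by (simp add: n_eq)
next
  case False
  have "lucas_u a n = lucas_v a h * lucas_u a h"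
    unfolding n_eq lucas_u_double by (rule mult.commute)
  then have "p^v dvd lucas_u a h"
    using dvd_lucas_u_n dvd_cancel[OF not_dvd_lucas_v[of h]] False h_ge by (simp add: n_eq)
  then show ?thesis
    using lucas_u_shift[OF z, of m h] False by (simp add: n_eq)
qed

lemma dvd_shift_n_iff: "in_L a z \<Longrightarrow> p^v dvd z (m + n) \<longleftrightarrow> p^v dvd z m"
  using antiperiodic[of z m] by (metis dvd_add_right_iff dvd_add_left_iff)

lemma dvd_half_shift_iff:
  assumes z: "in_L a z"
  shows "p^v dvd (if even h then companion a z (m + h) else z (m + h)) \<longleftrightarrow> p^v dvd z m"
proof -
  have "z (m + n) - z m = (z (m + n) + z m) - 2 * z m" by simp
  then have "p^v dvd z (m + n) - z m \<longleftrightarrow> p^v dvd 2 * z m"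
    by (simp only:) (rule dvd_diff_right_iff[OF antiperiodic[OF z]])
  then have "p^v dvd z (m + n) - z m \<longleftrightarrow> p^v dvd z m"
    by (simp add: dvd_cancel_2)
  then show ?thesis
    using dvd_shift_diff_iff[OF z, of h m] h_ge by (simp add: n_eq)
qed

text \<open>For odd \<open>h\<close> the zeros of \<open>W z\<close> are not controlled by those of \<open>z\<close>, so the first \<open>h\<close>
  terms of \<open>W z\<close> are probed as well.\<close>

definition probe :: "(nat \<Rightarrow> int) \<Rightarrow> nat \<Rightarrow> int" where
  "probe z i = (if odd h \<and> h \<le> i then companion a z (i - h) else z i)"

lemma exists_probe_dvd:
  assumes z: "in_L a z" and zero: "p^v dvd z j \<or> p^v dvd companion a z j"
  shows "\<exists>i<n. p^v dvd probe z i"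
proof (cases "even h")
  case True
  obtain j' where "p^v dvd z j'"
  proof (cases "p^v dvd z j")
    case True
    then show ?thesis by (rule that)
  next
    case False
    then have "p^v dvd companion a z ((j + h) + h)"
      using zero dvd_shift_n_iff[OF in_L_companion[OF z], of j] by (simp add: n_eq add.assoc mult_2)
    then show ?thesis
      using that dvd_half_shift_iff[OF z, of "j + h"] True by simp
  qed
  then have "p^v dvd z (j' mod n)"
    using mod_invariant[of "\<lambda>i. p^v dvd z i" n] dvd_shift_n_iff[OF z] by blast
  moreover have "j' mod n < n" using h_ge by (simp add: n_eq)
  ultimately show ?thesis using True by (auto simp: probe_def)
next
  case False
  have "p^v dvd y (j mod h) \<longleftrightarrow> p^v dvd y j" if "in_L a y" for y
    using mod_invariant[of "\<lambda>i. p^v dvd y i" h] dvd_half_shift_iff[OF that] False by simp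
  then have "p^v dvd z (j mod h) \<or> p^v dvd companion a z (j mod h)"
    using zero in_L_companion[OF z] z by blast
  moreover have "j mod h < h" using h_ge by simp
  ultimately show ?thesis
    using False n_eq by (auto simp: probe_def intro: exI[of _ "j mod h"] exI[of _ "h + j mod h"])
qed

lemma card_probe_dvd_le_1:
  "card {t \<in> {0..<p^v}. p^v dvd probe (seq_from_1 a t) i} \<le> 1"
proof (cases "odd h \<and> h \<le> i")
  case True
  have "{t \<in> {0..<p^v}. p^v dvd probe (seq_from_1 a t) i} = {t \<in> {0..<p^v}.
      p^v dvd companion a (seq_from_1 a 0) (i - h) + t * companion a (lucas_u a) (i - h)}"
    unfolding probe_def if_P[OF True] companion_def
    by (subst (1 2) seq_from_1_linear) (simp add: algebra_simps)
  moreover have "\<not> p dvd casoratian (companion a (seq_from_1 a 0)) (companion a (lucas_u a)) 0"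
    using not_dvd_disc
    by (simp add: casoratian_companion in_L_seq_from_1 in_L_lucas_u casoratian_seq_from_1)
  ultimately show ?thesis
    using card_dvd_residues_le_1[OF in_L_companion[OF in_L_seq_from_1]
        in_L_companion[OF in_L_lucas_u] prime] by simp
next
  case False
  have "{t \<in> {0..<p^v}. p^v dvd probe (seq_from_1 a t) i}
      = {t \<in> {0..<p^v}. p^v dvd seq_from_1 a 0 i + t * lucas_u a i}"
    unfolding probe_def if_not_P[OF False] by (subst seq_from_1_linear) simp
  moreover have "\<not> p dvd casoratian (seq_from_1 a 0) (lucas_u a) 0"
    using prime_gt_1_int[OF prime] by (simp add: casoratian_seq_from_1)
  ultimately show ?thesis
    using card_dvd_residues_le_1[OF in_L_seq_from_1 in_L_lucas_u prime] by simp
qed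

lemma exists_nonvanishing:
  obtains t where "\<And>j. \<not> p^v dvd seq_from_1 a t j"
    and "\<And>j. \<not> p^v dvd companion a (seq_from_1 a t) j"
proof -
  define S where "S i = {t \<in> {0..<p^v}. p^v dvd probe (seq_from_1 a t) i}" for i
  have "card (\<Union>i<n. S i) \<le> (\<Sum>i<n. card (S i))" by (rule card_UN_le) simp
  also have "\<dots> \<le> n"
    using sum_mono[of "{..<n}" "\<lambda>i. card (S i)" "\<lambda>_. 1"] card_probe_dvd_le_1 by (simp add: S_def)
  also have "n < card {0..<p^v}" using high by simp
  finally have "card (\<Union>i<n. S i) < card {0..<p^v}" .
  moreover have "finite (\<Union>i<n. S i)"
    by (rule finite_subset[of _ "{0..<p^v}"]) (auto simp: S_def)
  ultimately have "\<not> {0..<p^v} \<subseteq> (\<Union>i<n. S i)"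
    using card_mono leD by blast
  then obtain t where "t \<in> {0..<p^v}" "\<And>i. i < n \<Longrightarrow> t \<notin> S i" by blast
  then have "\<not> (p^v dvd seq_from_1 a t j \<or> p^v dvd companion a (seq_from_1 a t) j)" for j
    using exists_probe_dvd[OF in_L_seq_from_1] by (auto simp: S_def)
  then show ?thesis using that by blast
qed

lemma no_collision:
  assumes x: "in_L a x"
    and nonvanishing: "\<And>j. \<not> p^v dvd x j" "\<And>j. \<not> p^v dvd companion a x j"
    and st: "s < t" "t < s + 2 * n" "even (t - s)"
  shows "\<not> [x s = x t] (mod p^v)"
proof
  assume "[x s = x t] (mod p^v)"
  then have "p^v dvd x t - x s" using cong_sym cong_iff_dvd_diff by blast
  moreover obtain k where "t - s = 2 * k" using st(3) by (rule evenE)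
  then have k: "t = s + 2 * k" "1 \<le> k" "k < n" using st(1,2) by auto
  ultimately show False
    using dvd_shift_diff_iff[OF x k(2,3), of s] nonvanishing by (simp split: if_splits)
qed

lemma periodic_2n:
  assumes x: "in_L a x"
  shows "periodic_mod x (p^v) (2 * n)"
  unfolding periodic_mod_def cong_iff_dvd_diff
proof
  fix j
  have "x (j + 2 * n) - x j = (x ((j + n) + n) + x (j + n)) - (x (j + n) + x j)"
    by (simp add: mult_2 add.assoc)
  also have "p^v dvd \<dots>"
    by (intro dvd_diff antiperiodic[OF x])
  finally show "p^v dvd x (j + 2 * n) - x j" .
qed

lemma tau_eq_2n:
  assumes x: "in_L a x"
    and nonvanishing: "\<And>j. \<not> p^v dvd x j" "\<And>j. \<not> p^v dvd companion a x j"
  shows "tau x (p^v) = 2 * n"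
proof (rule tau_eqI)
  show "1 \<le> 2 * n" using h_ge n_eq by simp
  show periodic: "periodic_mod x (p^v) (2 * n)" by (rule periodic_2n[OF x])
  fix y assume y: "1 \<le> y" "y < 2 * n"
  show "\<not> periodic_mod x (p^v) y"
  proof
    assume y_per: "periodic_mod x (p^v) y"
    define y' where "y' = (if even y then y else 2 * (y mod n))"
    have "periodic_mod x (p^v) y'"
      using periodic_mod_mod[OF periodic periodic_mod_add[OF y_per y_per]] y_per
      by (simp add: y'_def mult_2[symmetric] mod_mult_mult1)
    then have "[x 0 = x y'] (mod p^v)"
      unfolding periodic_mod_def using cong_sym by (metis add_0)
    moreover have "y mod n \<noteq> 0" if "odd y"
      using that n_eq by (metis dvd_mult_left mod_0_imp_dvd)
    then have "0 < y'" "y' < 2 * n" "even y'"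
      using y h_ge n_eq by (auto simp: y'_def)
    ultimately show False
      using no_collision[OF x nonvanishing, of 0 y'] by simp
  qed
qed

end

lemma primitive_divisor_not_dvd:
  assumes "primitive_divisor a p n"
  shows "\<not> p dvd disc a" and "1 \<le> k \<Longrightarrow> k < n \<Longrightarrow> \<not> p dvd a * lehmer a k"
proof -
  define P where "P = a^2 * disc a * (\<Prod>k\<in>{1..<n}. lehmer a k)"
  have "\<not> p dvd P" using assms by (simp add: primitive_divisor_def P_def)
  moreover have "disc a dvd P" by (simp add: P_def)
  ultimately show "\<not> p dvd disc a" using dvd_trans by blast
  assume "1 \<le> k" "k < n"
  then have "a * lehmer a k dvd P"
    unfolding P_def power2_eq_square by (intro mult_dvd_mono dvd_prodI) auto
  then show "\<not> p dvd a * lehmer a k" using \<open>\<not> p dvd P\<close> dvd_trans by blast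
qed

lemma high_divisor_of_high_primitive_divisor:
  assumes "a \<noteq> 0" "n \<ge> 4" "even n" and high: "high_primitive_divisor a p n"
  shows "high_divisor a p n (n div 2) (multiplicity p (lehmer a n))"
proof -
  have prim: "primitive_divisor a p n"
    using high by (simp add: high_primitive_divisor_def)
  show ?thesis
  proof
    show "prime p" "odd p" "int n < p ^ multiplicity p (lehmer a n)"
      using high by (simp_all add: high_primitive_divisor_def primitive_divisor_def)
    show "n = 2 * (n div 2)" "n div 2 \<ge> 2" using assms by auto
    show "p ^ multiplicity p (lehmer a n) dvd lucas_u a n"
      using assms by (simp add: lucas_u_eq_lehmer dvd_mult multiplicity_dvd)
    show "\<not> p dvd disc a" by (rule primitive_divisor_not_dvd(1)[OF prim])
    show "\<not> p dvd lucas_u a k" if "1 \<le> k" "k < n" "even k" for k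
      using that assms lucas_u_eq_lehmer primitive_divisor_not_dvd(2)[OF prim] by simp
    show "\<not> p dvd lucas_v a k" if "1 \<le> k" "k < n" "odd k" for k
      using that assms lucas_v_eq_lehmer primitive_divisor_not_dvd(2)[OF prim] by simp
  qed
qed

theorem mainTheorem14:
  fixes a1 p :: int and n :: nat
  assumes "a1 \<ge> 1" and "n \<ge> 4" and "even n"
    and "high_primitive_divisor a1 p n"
    and "Legendre (disc a1) p = -1"
  shows "let v = multiplicity p (lehmer a1 n) in
    \<exists>x. in_L a1 x \<and> tau x (p^v) = 2*n \<and>
      (\<forall>s t. 0 < s \<and> s < t \<and> t < 2*n \<and> even (t - s) \<longrightarrow> \<not> [x s = x t] (mod p^v)) \<and>
      (\<forall>j. \<not> [x j = 0] (mod p^v))"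
proof -
  define v where "v = multiplicity p (lehmer a1 n)"
  interpret high_divisor a1 p n "n div 2" v
    unfolding v_def using assms by (intro high_divisor_of_high_primitive_divisor) auto
  obtain t where nonvanishing: "\<And>j. \<not> p^v dvd seq_from_1 a1 t j"
      "\<And>j. \<not> p^v dvd companion a1 (seq_from_1 a1 t) j"
    using exists_nonvanishing by blast
  have x: "in_L a1 (seq_from_1 a1 t)" by (rule in_L_seq_from_1)
  show ?thesis
    unfolding Let_def v_def[symmetric]
    using x nonvanishing tau_eq_2n[OF x nonvanishing] no_collision[OF x nonvanishing]
    by (intro exI[of _ "seq_from_1 a1 t"]) (auto simp: cong_0_iff)
qed

end
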